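(* Let $p\ne q$ be primes and let $T\colon\mathbb{Z}_p\times\mathbb{Z}_q^2\to\mathbb{N}$ be a multiset such that $\chi_{x+y}(T)=0$ for every nonzero $x\in\mathbb{Z}_p$ and every nonzero $y\in\mathbb{Z}_q^2$. For $i\in\mathbb{Z}_p$ define $g_i\colon\mathbb{Z}_q^2\to\mathbb{N}$ by $g_i(z)=T(i+z)$. Then $g_i-g_j$ is a constant function for all $i,j\in\mathbb{Z}_p$.
   Context: An element of $\mathbb{Z}_p\times\mathbb{Z}_q^2$ is written $x+y$ with $x\in\mathbb{Z}_p$, $y\in\mathbb{Z}_q^2$. For $w=x+y$ the character $\chi_w$ is $\chi_w(x'+y')=\exp\big(2\pi i(\tfrac{xx'}{p}+\tfrac{y\cdot y'}{q})\big)$, and for a multiset $T$, $\chi_w(T)=\sum_{z}T(z)\chi_w(z)$. *)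

theory Defs
  imports "HOL-Analysis.Analysis"
begin

text \<open>Elements of Z_p x Z_q^2 are represented by triples (x, (y1, y2)) with
  x in {0..<p}, y1, y2 in {0..<q}. A multiset T on this group is a function
  to nat; only its values on the carrier matter.\<close>

definition grp :: "nat \<Rightarrow> nat \<Rightarrow> (nat \<times> (nat \<times> nat)) set" where
  "grp p q = {0..<p} \<times> ({0..<q} \<times> {0..<q})"

definition chr :: "nat \<Rightarrow> nat \<Rightarrow> nat \<times> (nat \<times> nat) \<Rightarrow> nat \<times> (nat \<times> nat) \<Rightarrow> complex" where
  "chr p q w z = (case w of (x, (y1, y2)) \<Rightarrow> case z of (x', (y1', y2')) \<Rightarrow>
     exp (2 * of_real pi * \<i> *
          of_real (real (x * x') / real p + real (y1 * y1' + y2 * y2') / real q)))"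

definition chiT :: "nat \<Rightarrow> nat \<Rightarrow> nat \<times> (nat \<times> nat) \<Rightarrow> (nat \<times> (nat \<times> nat) \<Rightarrow> nat) \<Rightarrow> complex" where
  "chiT p q w T = (\<Sum>z\<in>grp p q. of_nat (T z) * chr p q w z)"

end

theory Submission
  imports Defs
begin

text \<open>For fixed \<open>y \<noteq> 0\<close>, the function
  \<open>k \<mapsto> \<Sum>\<^sub>z T(k + z) \<chi>\<^sub>y(z)\<close> on \<open>\<int>\<^sub>p\<close> has vanishing Fourier coefficients at every
  \<open>x \<noteq> 0\<close>, hence is constant. Consequently the Fourier coefficients of \<open>g\<^sub>i - g\<^sub>j\<close> on
  \<open>\<int>\<^sub>q\<^sup>2\<close> vanish at every \<open>y \<noteq> 0\<close>, so \<open>g\<^sub>i - g\<^sub>j\<close> is constant.\<close>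

definition unity_root :: "nat \<Rightarrow> nat \<Rightarrow> complex" where
  "unity_root n k = exp (2 * of_real pi * \<i> * of_real (real k / real n))"

lemma unity_root_0 [simp]: "unity_root n 0 = 1"
  by (simp add: unity_root_def)

lemma unity_root_add: "unity_root n (a + b) = unity_root n a * unity_root n b"
  unfolding unity_root_def by (simp add: add_divide_distrib distrib_left exp_add[symmetric])

lemma unity_root_mult: "unity_root n (m * k) = unity_root n k ^ m"
proof -
  have "2 * of_real pi * \<i> * of_real (real (m * k) / real n) =
        of_nat m * (2 * of_real pi * \<i> * of_real (real k / real n))"
    by (simp add: mult_ac)
  then show ?thesis
    unfolding unity_root_def by (simp only: exp_of_nat_mult)
qed

lemma unity_root_multiple:
  assumes "n > 0"
  shows "unity_root n (n * k) = 1"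
proof -
  have "unity_root n (n * k) = exp (of_nat k * (2 * of_real pi * \<i>))"
    unfolding unity_root_def using assms by (simp add: mult_ac)
  also have "\<dots> = 1"
    by (simp add: exp_of_nat_mult)
  finally show ?thesis .
qed

lemma unity_root_eq_1_iff:
  assumes "n > 0"
  shows "unity_root n k = 1 \<longleftrightarrow> n dvd k"
proof
  assume "unity_root n k = 1"
  then obtain m :: int where "2 * pi * (real k / real n) = 2 * pi * m"
    unfolding unity_root_def exp_eq_1 by auto
  then have "real k = real n * m"
    using assms by (simp add: field_simps)
  then have "int k = int n * m"
    by (metis of_int_eq_iff of_int_mult of_int_of_nat_eq)
  then show "n dvd k"
    by (metis dvd_triv_left int_dvd_int_iff)
qed (use assms unity_root_multiple in auto)

lemma sum_unity_root:
  assumes "n > 0"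
  shows "(\<Sum>x<n. unity_root n (x * k)) = (if n dvd k then of_nat n else 0)"
proof (cases "n dvd k")
  case True
  then have "unity_root n (x * k) = 1" for x
    using assms by (simp add: unity_root_eq_1_iff)
  then show ?thesis
    using True by simp
next
  case False
  then have "unity_root n k \<noteq> 1"
    using assms unity_root_eq_1_iff by blast
  then have "(\<Sum>x<n. unity_root n k ^ x) = (unity_root n k ^ n - 1) / (unity_root n k - 1)"
    by (rule geometric_sum)
  moreover have "unity_root n k ^ n = 1"
    using assms by (metis unity_root_mult unity_root_multiple)
  ultimately show ?thesis
    using False by (simp add: unity_root_mult)
qed

lemma dvd_add_diff_iff_eq:
  fixes i j n :: nat
  assumes "i < n" "j < n"
  shows "n dvd i + (n - j) \<longleftrightarrow> i = j"
proof
  assume "n dvd i + (n - j)"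
  then obtain c where c: "i + (n - j) = n * c" ..
  have "0 < n * c" "n * c < n * 2"
    using assms unfolding c[symmetric] by linarith+
  then have "c = 1"
    by (simp add: less_2_cases_iff)
  then have "i + (n - j) = n"
    using c by simp
  then show "i = j"
    using assms by simp
qed (use assms in simp)

text \<open>Here \<open>n - j\<close> represents \<open>-j\<close> in \<open>\<int>\<^sub>n\<close>.\<close>

lemma unity_root_orthogonality:
  assumes "i < n" "j < n"
  shows "(\<Sum>x<n. unity_root n (x * (i + (n - j)))) = (if i = j then of_nat n else 0)"
  using sum_unity_root[of n "i + (n - j)"] dvd_add_diff_iff_eq[OF assms] assms by simp

lemma fourier_vanishing_imp_constant:
  fixes f :: "nat \<Rightarrow> complex"
  assumes n: "n > 0"
    and vanish: "\<And>x. x \<in> {1..<n} \<Longrightarrow> (\<Sum>i<n. f i * unity_root n (x * i)) = 0"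
    and j: "j < n"
  shows "f j = (\<Sum>i<n. f i) / of_nat n"
proof -
  define F where "F x = (\<Sum>i<n. f i * unity_root n (x * i))" for x
  \<comment> \<open>Fourier inversion at \<open>j\<close>; of all coefficients only \<open>F 0 = \<Sum>f\<close> survives.\<close>
  have "(\<Sum>x<n. unity_root n (x * (n - j)) * F x) = F 0"
  proof -
    have "(\<Sum>x<n. unity_root n (x * (n - j)) * F x) =
          unity_root n (0 * (n - j)) * F 0 + (\<Sum>x\<in>{1..<n}. unity_root n (x * (n - j)) * F x)"
      using n by (simp add: lessThan_atLeast0 sum.atLeast_Suc_lessThan)
    then show ?thesis
      using vanish by (simp add: F_def)
  qed
  moreover have "(\<Sum>x<n. unity_root n (x * (n - j)) * F x) = f j * of_nat n"
  proof -
    have "(\<Sum>x<n. unity_root n (x * (n - j)) * F x) =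
          (\<Sum>i<n. f i * (\<Sum>x<n. unity_root n (x * (i + (n - j)))))"
      unfolding F_def sum_distrib_left
      by (subst sum.swap) (simp add: unity_root_add algebra_simps)
    also have "\<dots> = (\<Sum>i<n. if i = j then f i * of_nat n else 0)"
      using j by (intro sum.cong refl) (simp only: unity_root_orthogonality lessThan_iff, simp)
    finally show ?thesis
      using j by simp
  qed
  ultimately show ?thesis
    using n by (simp add: F_def field_simps)
qed

text \<open>The two-dimensional case reduces to the one-dimensional one, one coordinate at a time.\<close>

lemma fourier2_vanishing_imp_constant:
  fixes h :: "nat \<times> nat \<Rightarrow> complex"
  assumes n: "n > 0"
    and vanish: "\<And>y1 y2. y1 < n \<Longrightarrow> y2 < n \<Longrightarrow> (y1, y2) \<noteq> (0, 0) \<Longrightarrow>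
        (\<Sum>z\<in>{..<n} \<times> {..<n}. h z * unity_root n (y1 * fst z + y2 * snd z)) = 0"
    and "a \<in> {..<n} \<times> {..<n}"
  shows "h a = (\<Sum>z\<in>{..<n} \<times> {..<n}. h z) / of_nat n ^ 2"
proof -
  obtain a1 a2 where a: "a = (a1, a2)" "a1 < n" "a2 < n"
    using assms(3) by blast
  define G where "G y2 z1 = (\<Sum>z2<n. h (z1, z2) * unity_root n (y2 * z2))" for y2 z1
  have G_transform: "(\<Sum>z1<n. G y2 z1 * unity_root n (y1 * z1)) =
      (\<Sum>z\<in>{..<n} \<times> {..<n}. h z * unity_root n (y1 * fst z + y2 * snd z))" for y1 y2
    unfolding G_def sum_distrib_right sum.cartesian_product
    by (intro sum.cong refl) (clarsimp simp: unity_root_add mult_ac)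
  have G_zero: "G y2 a1 = 0" if y2: "y2 \<in> {1..<n}" for y2
  proof -
    have "G y2 a1 = (\<Sum>z1<n. G y2 z1) / of_nat n"
      by (rule fourier_vanishing_imp_constant[OF n _ a(2)])
        (use y2 in \<open>simp add: G_transform vanish\<close>)
    also have "(\<Sum>z1<n. G y2 z1) = 0"
      using G_transform[of y2 0] vanish[of 0 y2] y2 by simp
    finally show ?thesis
      by simp
  qed
  have "h (a1, a2) = (\<Sum>z2<n. h (a1, z2)) / of_nat n"
  proof (rule fourier_vanishing_imp_constant[OF n _ a(3)])
    fix y2 assume "y2 \<in> {1..<n}"
    from G_zero[OF this] show "(\<Sum>z2<n. h (a1, z2) * unity_root n (y2 * z2)) = 0"
      by (simp only: G_def)
  qed
  also have "(\<Sum>z2<n. h (a1, z2)) = G 0 a1"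
    by (simp add: G_def)
  also have "G 0 a1 = (\<Sum>z1<n. G 0 z1) / of_nat n"
  proof (rule fourier_vanishing_imp_constant[OF n _ a(2)])
    fix y1 assume "y1 \<in> {1..<n}"
    then show "(\<Sum>z1<n. G 0 z1 * unity_root n (y1 * z1)) = 0"
      using G_transform[of 0 y1] vanish[of y1 0] n by simp
  qed
  also have "(\<Sum>z1<n. G 0 z1) = (\<Sum>z\<in>{..<n} \<times> {..<n}. h z)"
    using G_transform[of 0 0] by simp
  finally show ?thesis
    using a by (simp add: power2_eq_square)
qed

lemma chr_eq_unity_root_mult:
  "chr p q (x, y) (k, z) = unity_root p (x * k) * unity_root q (fst y * fst z + snd y * snd z)"
  unfolding chr_def unity_root_def
  by (cases y; cases z) (simp add: distrib_left exp_add[symmetric])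

definition slice_coeff :: "nat \<Rightarrow> (nat \<times> (nat \<times> nat) \<Rightarrow> nat) \<Rightarrow> nat \<Rightarrow> nat \<times> nat \<Rightarrow> complex" where
  "slice_coeff q T k y =
     (\<Sum>z\<in>{..<q} \<times> {..<q}. of_nat (T (k, z)) * unity_root q (fst y * fst z + snd y * snd z))"

lemma chiT_eq_sum_slice_coeff:
  "chiT p q (x, y) T = (\<Sum>k<p. slice_coeff q T k y * unity_root p (x * k))"
proof -
  have "chiT p q (x, y) T =
      (\<Sum>k<p. \<Sum>z\<in>{..<q} \<times> {..<q}. of_nat (T (k, z)) * chr p q (x, y) (k, z))"
    unfolding chiT_def grp_def sum.cartesian_product by (simp add: atLeast0LessThan)
  then show ?thesis
    unfolding slice_coeff_def chr_eq_unity_root_mult sum_distrib_right by (simp add: mult_ac)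
qed

lemma slice_coeff_eq_if_chiT_vanishes:
  assumes "p > 0" and vanish: "\<And>x. x \<in> {1..<p} \<Longrightarrow> chiT p q (x, y) T = 0"
    and "i < p" "j < p"
  shows "slice_coeff q T i y = slice_coeff q T j y"
proof -
  have "(\<Sum>k<p. slice_coeff q T k y * unity_root p (x * k)) = 0" if "x \<in> {1..<p}" for x
    using vanish[OF that] by (simp only: chiT_eq_sum_slice_coeff)
  from fourier_vanishing_imp_constant[OF \<open>p > 0\<close> this \<open>i < p\<close>]
    fourier_vanishing_imp_constant[OF \<open>p > 0\<close> this \<open>j < p\<close>]
  show ?thesis
    by (simp only:)
qed

lemma slice_difference_constant:
  fixes T :: "nat \<times> (nat \<times> nat) \<Rightarrow> nat"
  assumes "q > 0"
    and coeff_eq: "\<And>y. y \<in> {..<q} \<times> {..<q} \<Longrightarrow> y \<noteq> (0, 0) \<Longrightarrow>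
        slice_coeff q T i y = slice_coeff q T j y"
    and "z \<in> {..<q} \<times> {..<q}"
  shows "int (T (i, z)) - int (T (j, z)) = int (T (i, (0, 0))) - int (T (j, (0, 0)))"
proof -
  define h where "h z = of_nat (T (i, z)) - (of_nat (T (j, z)) :: complex)" for z
  have h_mean: "h z = (\<Sum>z\<in>{..<q} \<times> {..<q}. h z) / of_nat q ^ 2" if "z \<in> {..<q} \<times> {..<q}" for z
  proof (rule fourier2_vanishing_imp_constant[OF \<open>q > 0\<close> _ that])
    fix y1 y2 assume "y1 < q" "y2 < q" "(y1, y2) \<noteq> (0, 0)"
    then have "slice_coeff q T i (y1, y2) - slice_coeff q T j (y1, y2) = 0"
      using coeff_eq by simp
    then show "(\<Sum>z\<in>{..<q} \<times> {..<q}. h z * unity_root q (y1 * fst z + y2 * snd z)) = 0"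
      unfolding slice_coeff_def h_def sum_subtractf[symmetric] by (simp add: left_diff_distrib)
  qed
  have "h z = h (0, 0)"
    using h_mean[OF \<open>z \<in> {..<q} \<times> {..<q}\<close>] h_mean[of "(0, 0)"] \<open>q > 0\<close> by simp
  then have "of_int (int (T (i, z)) - int (T (j, z))) =
      (of_int (int (T (i, (0, 0))) - int (T (j, (0, 0)))) :: complex)"
    by (simp add: h_def)
  then show ?thesis
    by (simp only: of_int_eq_iff)
qed

theorem proposition4p2:
  fixes p q :: nat and T :: "nat \<times> (nat \<times> nat) \<Rightarrow> nat"
  assumes "prime p" and "prime q" and "p \<noteq> q"
    and "\<And>x y. x \<in> {1..<p} \<Longrightarrow> y \<in> {0..<q} \<times> {0..<q} \<Longrightarrow> y \<noteq> (0, 0) \<Longrightarrow>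
           chiT p q (x, y) T = 0"
  shows "\<forall>i\<in>{0..<p}. \<forall>j\<in>{0..<p}. \<exists>c::int.
           \<forall>z\<in>{0..<q} \<times> {0..<q}. int (T (i, z)) - int (T (j, z)) = c"
proof (intro ballI)
  fix i j assume "i \<in> {0..<p}" "j \<in> {0..<p}"
  have "p > 0" "q > 0"
    using assms(1,2) prime_gt_0_nat by auto
  have "slice_coeff q T i y = slice_coeff q T j y"
    if "y \<in> {..<q} \<times> {..<q}" "y \<noteq> (0, 0)" for y
  proof (rule slice_coeff_eq_if_chiT_vanishes)
    show "chiT p q (x, y) T = 0" if "x \<in> {1..<p}" for x
      using assms(4)[OF \<open>x \<in> {1..<p}\<close> _ \<open>y \<noteq> (0, 0)\<close>] \<open>y \<in> {..<q} \<times> {..<q}\<close>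
      by (simp add: atLeast0LessThan)
  qed (use \<open>p > 0\<close> \<open>i \<in> {0..<p}\<close> \<open>j \<in> {0..<p}\<close> in auto)
  from slice_difference_constant[OF \<open>q > 0\<close> this]
  show "\<exists>c::int. \<forall>z\<in>{0..<q} \<times> {0..<q}. int (T (i, z)) - int (T (j, z)) = c"
    by (auto simp: atLeast0LessThan)
qed

end
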